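(* Fix an integer $k\geq1$ and let $\mathcal{A}_k$ be the extended chiral algebra described in the context. Let $|\psi\rangle$ be an arbitrary state in an $\mathcal{A}_k$-highest weight module, and let $m,n\in\{0,\ldots,k\}$ and $r,s$ be such that $\phi^{(m)}_r\phi^{(n)}_s|\psi\rangle$ is defined. Then $\phi^{(m)}_r\phi^{(n)}_s|\psi\rangle$ can be written as a linear combination of affine descendants of $|\psi\rangle$, i.e. of states $X|\psi\rangle$ with $X$ in the universal enveloping algebra of the level-$k$ affine $\mathfrak{sl}(2)$ algebra (generated by the $E_t,H_t,F_t$).
   Context: Affine algebra: the level-$k$ affine $\mathfrak{sl}(2)$ chiral algebra has modes $E_n,H_n,F_n$ ($n\in\mathbb{Z}$) with $[H_m,E_n]=2E_{m+n}$, $[H_m,F_n]=-2F_{m+n}$, $[E_m,F_n]=H_{m+n}+mk\delta_{m+n,0}$, $[H_m,H_n]=2mk\delta_{m+n,0}$, $[E_m,E_n]=[F_m,F_n]=0$; Virasoro modes by the Sugawara construction. For $\lambda=0,\ldots,k$, $|\psi_\lambda\rangle=|\psi_\lambda^{(0)}\rangle$ is a unit-norm affine highest weight state of $H_0$-eigenvalue $\lambda$ and conformal dimension $\lambda(\lambda+2)/(4(k+2))$; $|0\rangle=|\psi_0\rangle$; zero-grade descendants $|\psi_\lambda^{(n)}\rangle$ satisfy $F_0|\psi_\lambda^{(n)}\rangle=[(n+1)(\lambda-n)]^{1/2}|\psi_\lambda^{(n+1)}\rangle$. Extended algebra $\mathcal{A}_k$: the simple current $\phi=\psi_k$ has component fields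 $\phi^{(m)}(z)$, $m=0,\ldots,k$, of conformal dimension $k/4$, with modes $\phi^{(m)}_r$. $\mathcal{A}_k$ is the $*$-algebra generated by the $\phi^{(m)}_r$ (adjoint $(\phi^{(m)}_r)^\dagger=\phi^{(k-m)}_{-r}$), containing the affine modes, subject to: (i) $\{E_r,\phi^{(m)}_s\}=[m(k+1-m)]^{1/2}\phi^{(m-1)}_{r+s}$, $[H_r,\phi^{(m)}_s]=(k-2m)\phi^{(m)}_{r+s}$, $\{F_r,\phi^{(m)}_s\}=[(m+1)(k-m)]^{1/2}\phi^{(m+1)}_{r+s}$; (ii) for every $\gamma\in\mathbb{Z}$ the generalised commutation relation $$\sum_{\ell\geq0}\binom{\ell-k/2+\gamma-1}{\ell}\Big[\phi^{(m)}_{r-\ell}\phi^{(n)}_{s+\ell}-(-1)^{k-m-n+\gamma}\phi^{(n)}_{s+k/2-\gamma-\ell}\phi^{(m)}_{r-k/2+\gamma+\ell}\Big]=\mathcal{S}_{m,n}\sum_{j=0}^{\gamma-1}\binom{r-k/4+\gamma-1}{\gamma-1-j}A^{(m,n;j)}_{r+s},$$ where $A^{(m,n;j)}_t$ are modes of vacuum-module fields (normally ordered polynomials in affine currents and their derivatives) defined by the operator product expansion $\phi^{(m)}(z)\phi^{(n)}(w)=\mathcal{S}_{m,n}\sum_{j\geq0}A^{(m,n;j)}(w)(z-w)^{j-k/2}$, and the $\mathcal{S}_{m,n}$ commute with all of $\mathcal{A}_k$ and act as nonzero scalars on highest weight modules. Monodromy: on a state of monodromy charge $\theta\in\frac12\mathbb{Z}$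 the modes $\phi^{(m)}_r$ act with $r\in\mathbb{Z}+\theta-k/4$; $|\psi_\lambda^{(n)}\rangle$ has charge $\lambda/2$, affine modes preserve charge mod 1, $\phi$-modes shift it by $k/2$. An $\mathcal{A}_k$-highest weight state is an affine highest weight state $|\psi_\lambda\rangle$ with $\phi^{(m)}_r|\psi_\lambda\rangle=0$ for $r>0$, or $r=0$ and $m<k/2$; an $\mathcal{A}_k$-highest weight module is generated from such a state by $\mathcal{A}_k$, and in it, for each state and each $m$, $\phi^{(m)}_r$ annihilates the state for all sufficiently large $r$. *)

theory Defs
  imports Complex_Main
begin

text \<open>Affine modes E t, H t, F t (t integer); simple-current modes phi m r with m in 0..k and
  r rational (the modes actually used are r in Z + theta - k/4 on states of charge theta);
  vacuum-module modes A m n j t.\<close>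

definition mode_ok :: "nat \<Rightarrow> rat \<Rightarrow> rat \<Rightarrow> bool" where
  "mode_ok k \<theta> r \<longleftrightarrow> r - \<theta> + of_nat k / 4 \<in> \<int>"

text \<open>Affine descendants of v: the span of all X v, X in the enveloping algebra of the affine
  modes (smallest subspace containing v and stable under all E t, H t, F t).\<close>
inductive_set aff_desc :: "(complex \<Rightarrow> 'v \<Rightarrow> 'v) \<Rightarrow> (int \<Rightarrow> 'v \<Rightarrow> 'v) \<Rightarrow> (int \<Rightarrow> 'v \<Rightarrow> 'v)
    \<Rightarrow> (int \<Rightarrow> 'v \<Rightarrow> 'v) \<Rightarrow> 'v \<Rightarrow> ('v::ab_group_add) set"
  for sc E H F v where
  base: "v \<in> aff_desc sc E H F v"
| zero: "0 \<in> aff_desc sc E H F v"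
| add: "u \<in> aff_desc sc E H F v \<Longrightarrow> w \<in> aff_desc sc E H F v \<Longrightarrow> u + w \<in> aff_desc sc E H F v"
| scale: "u \<in> aff_desc sc E H F v \<Longrightarrow> sc c u \<in> aff_desc sc E H F v"
| modeE: "u \<in> aff_desc sc E H F v \<Longrightarrow> E t u \<in> aff_desc sc E H F v"
| modeH: "u \<in> aff_desc sc E H F v \<Longrightarrow> H t u \<in> aff_desc sc E H F v"
| modeF: "u \<in> aff_desc sc E H F v \<Longrightarrow> F t u \<in> aff_desc sc E H F v"

text \<open>The A_k-highest weight module generated from v0 (of monodromy charge theta0), as a set of
  pairs (charge, state). Charges are only meaningful mod 1.\<close>
inductive_set hw_module :: "(complex \<Rightarrow> 'v \<Rightarrow> 'v) \<Rightarrow> nat \<Rightarrow> (int \<Rightarrow> 'v \<Rightarrow> 'v) \<Rightarrow> (int \<Rightarrow> 'v \<Rightarrow> 'v)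
    \<Rightarrow> (int \<Rightarrow> 'v \<Rightarrow> 'v) \<Rightarrow> (nat \<Rightarrow> rat \<Rightarrow> 'v \<Rightarrow> 'v) \<Rightarrow> rat \<Rightarrow> 'v \<Rightarrow> (rat \<times> ('v::ab_group_add)) set"
  for sc k E H F phi \<theta>0 v0 where
  base: "(\<theta>0, v0) \<in> hw_module sc k E H F phi \<theta>0 v0"
| add: "(\<theta>, u) \<in> hw_module sc k E H F phi \<theta>0 v0 \<Longrightarrow> (\<theta>, w) \<in> hw_module sc k E H F phi \<theta>0 v0
        \<Longrightarrow> (\<theta>, u + w) \<in> hw_module sc k E H F phi \<theta>0 v0"
| scale: "(\<theta>, u) \<in> hw_module sc k E H F phi \<theta>0 v0 \<Longrightarrow> (\<theta>, sc c u) \<in> hw_module sc k E H F phi \<theta>0 v0"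
| shift_up: "(\<theta>, u) \<in> hw_module sc k E H F phi \<theta>0 v0 \<Longrightarrow> (\<theta> + 1, u) \<in> hw_module sc k E H F phi \<theta>0 v0"
| shift_down: "(\<theta>, u) \<in> hw_module sc k E H F phi \<theta>0 v0 \<Longrightarrow> (\<theta> - 1, u) \<in> hw_module sc k E H F phi \<theta>0 v0"
| modeE: "(\<theta>, u) \<in> hw_module sc k E H F phi \<theta>0 v0 \<Longrightarrow> (\<theta>, E t u) \<in> hw_module sc k E H F phi \<theta>0 v0"
| modeH: "(\<theta>, u) \<in> hw_module sc k E H F phi \<theta>0 v0 \<Longrightarrow> (\<theta>, H t u) \<in> hw_module sc k E H F phi \<theta>0 v0"
| modeF: "(\<theta>, u) \<in> hw_module sc k E H F phi \<theta>0 v0 \<Longrightarrow> (\<theta>, F t u) \<in> hw_module sc k E H F phi \<theta>0 v0"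
| modephi: "(\<theta>, u) \<in> hw_module sc k E H F phi \<theta>0 v0 \<Longrightarrow> m \<le> k \<Longrightarrow> mode_ok k \<theta> r
        \<Longrightarrow> (\<theta> + of_nat k / 2, phi m r u) \<in> hw_module sc k E H F phi \<theta>0 v0"

definition affine_rels :: "(complex \<Rightarrow> 'v \<Rightarrow> 'v) \<Rightarrow> nat \<Rightarrow> (int \<Rightarrow> 'v \<Rightarrow> 'v) \<Rightarrow> (int \<Rightarrow> 'v \<Rightarrow> 'v)
    \<Rightarrow> (int \<Rightarrow> 'v \<Rightarrow> 'v) \<Rightarrow> (rat \<times> ('v::ab_group_add)) set \<Rightarrow> bool" where
  "affine_rels sc k E H F G \<longleftrightarrow> (\<forall>\<theta> v a b. (\<theta>, v) \<in> G \<longrightarrow>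
      H a (E b v) - E b (H a v) = sc 2 (E (a + b) v) \<and>
      H a (F b v) - F b (H a v) = sc (-2) (F (a + b) v) \<and>
      E a (F b v) - F b (E a v) = H (a + b) v + sc (if a + b = 0 then of_int a * of_nat k else 0) v \<and>
      H a (H b v) - H b (H a v) = sc (if a + b = 0 then 2 * of_int a * of_nat k else 0) v \<and>
      E a (E b v) = E b (E a v) \<and> F a (F b v) = F b (F a v))"

text \<open>Relations (i) between affine modes and the components of the simple current
  (brackets exactly as in the context: anticommutator for E and F, commutator for H).\<close>
definition phi_affine_rels :: "(complex \<Rightarrow> 'v \<Rightarrow> 'v) \<Rightarrow> nat \<Rightarrow> (int \<Rightarrow> 'v \<Rightarrow> 'v) \<Rightarrow> (int \<Rightarrow> 'v \<Rightarrow> 'v)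
    \<Rightarrow> (int \<Rightarrow> 'v \<Rightarrow> 'v) \<Rightarrow> (nat \<Rightarrow> rat \<Rightarrow> 'v \<Rightarrow> 'v) \<Rightarrow> (rat \<times> ('v::ab_group_add)) set \<Rightarrow> bool" where
  "phi_affine_rels sc k E H F phi G \<longleftrightarrow> (\<forall>\<theta> v a m s. (\<theta>, v) \<in> G \<longrightarrow> m \<le> k \<longrightarrow> mode_ok k \<theta> s \<longrightarrow>
      E a (phi m s v) + phi m s (E a v)
        = sc (of_real (sqrt (real (m * (k + 1 - m))))) (phi (m - 1) (s + of_int a) v) \<and>
      H a (phi m s v) - phi m s (H a v) = sc (of_int (int k - 2 * int m)) (phi m (s + of_int a) v) \<and>
      F a (phi m s v) + phi m s (F a v)
        = sc (of_real (sqrt (real ((m + 1) * (k - m))))) (phi (m + 1) (s + of_int a) v))"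

text \<open>The infinite sum over l is the limit of its partial sums
  (these are eventually constant on the module by the annihilation property).\<close>
definition gen_comm_rels :: "(complex \<Rightarrow> 'v \<Rightarrow> 'v) \<Rightarrow> nat \<Rightarrow> (nat \<Rightarrow> rat \<Rightarrow> 'v \<Rightarrow> 'v)
    \<Rightarrow> (nat \<Rightarrow> nat \<Rightarrow> nat \<Rightarrow> rat \<Rightarrow> 'v \<Rightarrow> 'v) \<Rightarrow> (nat \<Rightarrow> nat \<Rightarrow> complex)
    \<Rightarrow> (rat \<times> ('v::ab_group_add)) set \<Rightarrow> bool" where
  "gen_comm_rels sc k phi A S G \<longleftrightarrow>
    (\<forall>\<gamma>::int. \<forall>m\<le>k. \<forall>n\<le>k. \<forall>\<theta> v r s. (\<theta>, v) \<in> G \<longrightarrow> mode_ok k \<theta> s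
       \<longrightarrow> mode_ok k (\<theta> + of_nat k / 2) r \<longrightarrow>
      (\<forall>\<^sub>F L in sequentially.
        (\<Sum>l<L. sc (of_rat (of_nat l - of_nat k / 2 + of_int \<gamma> - 1) gchoose l)
            (phi m (r - of_nat l) (phi n (s + of_nat l) v)
             - sc ((-1) powi (int k - int m - int n + \<gamma>))
                  (phi n (s + of_nat k / 2 - of_int \<gamma> - of_nat l)
                     (phi m (r - of_nat k / 2 + of_int \<gamma> + of_nat l) v))))
        = sc (S m n) (\<Sum>j<nat \<gamma>. sc (of_rat (r - of_nat k / 4 + of_int \<gamma> - 1) gchoose (nat (\<gamma> - 1 - int j)))
                                      (A m n j (r + s) v))))"

end

theory Submission
  imports Defs
begin

text \<open>Take \<gamma> in the generalised commutation relation so large that all the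
  modes phi m (r - k/2 + \<gamma> + l) annihilate \<psi>. The relation then expresses
  phi m r (phi n s \<psi>) by affine descendants of \<psi> and by terms
  phi m (r - l) (phi n (s + l) \<psi>) with l > 0. Since phi n annihilates \<psi> for large modes,
  induction on how far s lies below that bound finishes the proof.\<close>

lemma mode_ok_add_of_int [simp]: "mode_ok k \<theta> (r + of_int z) \<longleftrightarrow> mode_ok k \<theta> r"
proof -
  have "r + of_int z - \<theta> + of_nat k / 4 = (r - \<theta> + of_nat k / 4) + of_int z"
    by simp
  then show ?thesis
    unfolding mode_ok_def by (metis Ints_add Ints_diff Ints_of_int add_diff_cancel_right')
qed

lemma mode_ok_add_of_nat [simp]: "mode_ok k \<theta> (r + of_nat l) \<longleftrightarrow> mode_ok k \<theta> r"
  using mode_ok_add_of_int[of k \<theta> r "int l"] by simp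

lemma mode_ok_diff_of_nat [simp]: "mode_ok k \<theta> (r - of_nat l) \<longleftrightarrow> mode_ok k \<theta> r"
  using mode_ok_add_of_int[of k \<theta> r "- int l"] by simp

lemma mode_ok_charge_shift: "mode_ok k (\<theta> + a) r \<longleftrightarrow> mode_ok k \<theta> (r - a)"
  unfolding mode_ok_def by (simp add: algebra_simps)

context module
begin

lemma subspace_triangular_descent:
  fixes f :: "rat \<Rightarrow> rat \<Rightarrow> 'b"
  assumes D: "subspace D"
    and P_shift: "\<And>r l. P r \<Longrightarrow> P (r - of_nat l)"
    and Q_shift: "\<And>s l. Q s \<Longrightarrow> Q (s + of_nat l)"
    and vanish: "\<And>r s. P r \<Longrightarrow> Q s \<Longrightarrow> s \<ge> R \<Longrightarrow> f r s = 0"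
    and recursion: "\<And>r s. P r \<Longrightarrow> Q s \<Longrightarrow> \<exists>N c.
      f r s + (\<Sum>l<N. c l *s f (r - of_nat (Suc l)) (s + of_nat (Suc l))) \<in> D"
    and "P r" "Q s"
  shows "f r s \<in> D"
proof -
  have "\<forall>r s. P r \<longrightarrow> Q s \<longrightarrow> R - of_nat d \<le> s \<longrightarrow> f r s \<in> D" for d :: nat
  proof (induction d)
    case 0
    then show ?case using vanish subspace_0[OF D] by simp
  next
    case (Suc d)
    show ?case
    proof (intro allI impI)
      fix r s assume "P r" "Q s" and s: "R - of_nat (Suc d) \<le> s"
      obtain N c where N: "f r s + (\<Sum>l<N. c l *s f (r - of_nat (Suc l)) (s + of_nat (Suc l))) \<in> D"
        using recursion[OF \<open>P r\<close> \<open>Q s\<close>] by blast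
      have "f (r - of_nat (Suc l)) (s + of_nat (Suc l)) \<in> D" for l
      proof -
        have "R - of_nat d \<le> s + of_nat (Suc l)" using s by simp
        then show ?thesis using Suc.IH P_shift[OF \<open>P r\<close>] Q_shift[OF \<open>Q s\<close>] by blast
      qed
      then have "(\<Sum>l<N. c l *s f (r - of_nat (Suc l)) (s + of_nat (Suc l))) \<in> D"
        by (intro subspace_sum[OF D] subspace_scale[OF D])
      with N have "f r s + (\<Sum>l<N. c l *s f (r - of_nat (Suc l)) (s + of_nat (Suc l)))
          - (\<Sum>l<N. c l *s f (r - of_nat (Suc l)) (s + of_nat (Suc l))) \<in> D"
        by (rule subspace_diff[OF D])
      then show "f r s \<in> D" by simp
    qed
  qed
  moreover have "R - of_nat (nat \<lceil>R - s\<rceil>) \<le> s"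
    by (cases "R \<le> s") (simp_all, linarith)
  ultimately show ?thesis using \<open>P r\<close> \<open>Q s\<close> by blast
qed

end

lemma subspace_aff_desc:
  assumes "vector_space sc"
  shows "module.subspace sc (aff_desc sc E H F v)"
proof -
  interpret vector_space sc by (fact assms)
  show ?thesis
    unfolding subspace_def by (auto intro: aff_desc.zero aff_desc.add aff_desc.scale)
qed

lemma gen_comm_rels_leading_term:
  assumes vs: "vector_space sc"
    and lin_phi: "\<And>m r. Vector_Spaces.linear sc sc (phi m r)"
    and rel: "gen_comm_rels sc k phi A S G"
    and psi: "(\<theta>, \<psi>) \<in> G"
    and mn: "m \<le> k" "n \<le> k"
    and A_desc: "\<And>j t. A m n j t \<psi> \<in> aff_desc sc E H F \<psi>"
    and trunc: "\<And>r. mode_ok k \<theta> r \<Longrightarrow> r \<ge> R \<Longrightarrow> phi m r \<psi> = 0"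
    and rs: "mode_ok k \<theta> s" "mode_ok k (\<theta> + of_nat k / 2) r"
  shows "\<exists>N c. phi m r (phi n s \<psi>)
      + (\<Sum>l<N. sc (c l) (phi m (r - of_nat (Suc l)) (phi n (s + of_nat (Suc l)) \<psi>)))
      \<in> aff_desc sc E H F \<psi>"
proof -
  interpret vector_space sc by (fact vs)
  have phi_0: "phi i t 0 = 0" for i t
    using module_hom.zero[OF lin_phi[unfolded linear_iff_module_hom]] .
  define \<gamma> where "\<gamma> = \<lceil>R - r + of_nat k / 2\<rceil>"
  define b :: "nat \<Rightarrow> complex"
    where "b l = of_rat (of_nat l - of_nat k / 2 + of_int \<gamma> - 1) gchoose l" for l
  define X where "X l = phi m (r - of_nat l) (phi n (s + of_nat l) \<psi>)" for l
  have annihilated: "phi m (r - of_nat k / 2 + of_int \<gamma> + of_nat l) \<psi> = 0" for l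
  proof (rule trunc)
    show "mode_ok k \<theta> (r - of_nat k / 2 + of_int \<gamma> + of_nat l)"
      using rs(2) by (simp add: mode_ok_charge_shift)
    show "R \<le> r - of_nat k / 2 + of_int \<gamma> + of_nat l"
      unfolding \<gamma>_def by linarith
  qed
  from rel[unfolded gen_comm_rels_def, rule_format, OF mn psi rs, of \<gamma>]
  obtain N where "(\<Sum>l<Suc N. sc (b l) (X l - sc ((-1) powi (int k - int m - int n + \<gamma>))
        (phi n (s + of_nat k / 2 - of_int \<gamma> - of_nat l) (phi m (r - of_nat k / 2 + of_int \<gamma> + of_nat l) \<psi>))))
      = sc (S m n) (\<Sum>j<nat \<gamma>. sc (of_rat (r - of_nat k / 4 + of_int \<gamma> - 1) gchoose (nat (\<gamma> - 1 - int j)))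
          (A m n j (r + s) \<psi>))"
    unfolding eventually_sequentially b_def X_def by (blast intro: le_SucI)
  then have "(\<Sum>l<Suc N. sc (b l) (X l)) \<in> aff_desc sc E H F \<psi>"
    using subspace_aff_desc[OF vs] A_desc
    by (simp add: annihilated phi_0) (intro subspace_scale subspace_sum)
  moreover have "(\<Sum>l<Suc N. sc (b l) (X l)) = X 0 + (\<Sum>l<N. sc (b (Suc l)) (X (Suc l)))"
    by (simp only: sum.lessThan_Suc_shift) (simp add: b_def)
  ultimately have "X 0 + (\<Sum>l<N. sc (b (Suc l)) (X (Suc l))) \<in> aff_desc sc E H F \<psi>"
    by simp
  then show ?thesis
    unfolding X_def by auto
qed

theorem lemma2:
  fixes sc :: "complex \<Rightarrow> 'v::ab_group_add \<Rightarrow> 'v"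
    and k :: nat and lam :: nat
    and E H F :: "int \<Rightarrow> 'v \<Rightarrow> 'v"
    and phi :: "nat \<Rightarrow> rat \<Rightarrow> 'v \<Rightarrow> 'v"
    and A :: "nat \<Rightarrow> nat \<Rightarrow> nat \<Rightarrow> rat \<Rightarrow> 'v \<Rightarrow> 'v"
    and S :: "nat \<Rightarrow> nat \<Rightarrow> complex"
    and v0 :: 'v
  defines "G \<equiv> hw_module sc k E H F phi (of_nat lam / 2) v0"
  assumes k: "k \<ge> 1"
    and vs: "vector_space sc"
    and lin_E: "\<And>t. Vector_Spaces.linear sc sc (E t)"
    and lin_H: "\<And>t. Vector_Spaces.linear sc sc (H t)"
    and lin_F: "\<And>t. Vector_Spaces.linear sc sc (F t)"
    and lin_phi: "\<And>m r. Vector_Spaces.linear sc sc (phi m r)"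
    and lin_A: "\<And>m n j t. Vector_Spaces.linear sc sc (A m n j t)"
    and aff: "affine_rels sc k E H F G"
    and rel_i: "phi_affine_rels sc k E H F phi G"
    and rel_ii: "gen_comm_rels sc k phi A S G"
    and S_nz: "\<And>m n. S m n \<noteq> 0"
    and A_vac: "\<And>\<theta> v m n j t. (\<theta>, v) \<in> G \<Longrightarrow> A m n j t v \<in> aff_desc sc E H F v"
    and lam: "lam \<le> k"
    and v0_nz: "v0 \<noteq> 0"
    and hw_aff: "E 0 v0 = 0" "H 0 v0 = sc (of_nat lam) v0"
      "\<And>t. t > 0 \<Longrightarrow> E t v0 = 0 \<and> H t v0 = 0 \<and> F t v0 = 0"
    and hw_phi: "\<And>m r. m \<le> k \<Longrightarrow> mode_ok k (of_nat lam / 2) r \<Longrightarrow>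
                   r > 0 \<or> (r = 0 \<and> 2 * m < k) \<Longrightarrow> phi m r v0 = 0"
    and trunc: "\<And>\<theta> v m. (\<theta>, v) \<in> G \<Longrightarrow> m \<le> k \<Longrightarrow>
                   \<exists>R. \<forall>r. mode_ok k \<theta> r \<longrightarrow> r \<ge> R \<longrightarrow> phi m r v = 0"
    and psi: "(\<theta>, \<psi>) \<in> G"
    and mn: "m \<le> k" "n \<le> k"
    and rs: "mode_ok k \<theta> s" "mode_ok k (\<theta> + of_nat k / 2) r"
  shows "phi m r (phi n s \<psi>) \<in> aff_desc sc E H F \<psi>"
proof -
  interpret vector_space sc by (fact vs)
  obtain Rm where Rm: "\<And>r. mode_ok k \<theta> r \<Longrightarrow> r \<ge> Rm \<Longrightarrow> phi m r \<psi> = 0"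
    using trunc[OF psi mn(1)] by blast
  obtain Rn where Rn: "\<And>s. mode_ok k \<theta> s \<Longrightarrow> s \<ge> Rn \<Longrightarrow> phi n s \<psi> = 0"
    using trunc[OF psi mn(2)] by blast
  show ?thesis
  proof (rule subspace_triangular_descent[where f = "\<lambda>r s. phi m r (phi n s \<psi>)"
        and P = "mode_ok k (\<theta> + of_nat k / 2)" and Q = "mode_ok k \<theta>" and R = Rn])
    show "phi m r (phi n s \<psi>) = 0" if "mode_ok k \<theta> s" "Rn \<le> s" for r s
      using Rn[OF that] module_hom.zero[OF lin_phi[unfolded linear_iff_module_hom]] by simp
    show "\<exists>N c. phi m r (phi n s \<psi>)
        + (\<Sum>l<N. sc (c l) (phi m (r - of_nat (Suc l)) (phi n (s + of_nat (Suc l)) \<psi>)))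
        \<in> aff_desc sc E H F \<psi>"
      if "mode_ok k (\<theta> + of_nat k / 2) r" "mode_ok k \<theta> s" for r s
      using gen_comm_rels_leading_term[OF vs lin_phi rel_ii psi mn A_vac[OF psi] Rm] that
      by blast
  qed (use subspace_aff_desc[OF vs] rs in auto)
qed

end
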